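(* Let $K$ be either $\{1,2,3\}$ or $\{1,2,4\}$. The set of all groupoid identities $p=q$ satisfying the following conditions forms a basis for $\Sigma_K$. Every variable $x$ occurring in $p$ or $q$ either occurs exactly once in $p$ and exactly once in $q$, or occurs exactly twice in $p$ and exactly twice in $q$. If $x$ occurs exactly once in both $p$ and $q$, then the color of $x$ is the same in $p$ and in $q$. If $x$ occurs twice, then: for $K=\{1,2,3\}$, its two occurrences have colors $\alpha$ and $\beta$ in one of the terms and colors $\gamma$ and $1$ in the other; for $K=\{1,2,4\}$, its two occurrences have colors $\alpha$ and $\gamma$ in one of the terms and colors $\beta$ and $1$ in the other.
   Context: Let $f_1(x,y)=x+y$, $f_2(x,y)=x-y$, $f_3(x,y)=-x+y$, $f_4(x,y)=-x-y$ on $\mathbb{Z}$. For $K\subseteq\{1,2,3,4\}$, $\Sigma_K$ is the set of groupoid identities satisfied in $\mathbb{Z}$ by $f_k$ for every $k\in K$. Let $\mathbf{KL}=\{1,\alpha,\beta,\gamma\}$ be the Klein 4-group ($\alpha^2=\beta^2=1$, $\alpha\beta=\gamma$). The color of an occurrence of a variable in a term $p$ is the element of $\mathbf{KL}$ obtained by following the path from the whole term down to that occurrence, starting with $1$ and multiplying by $\alpha$ each time one passes to the left factor of a product and by $\beta$ each time one passes to the right factor. A basis for $\Sigma_K$ is a set of identities whose equational consequences are exactly $\Sigma_K$. *)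

theory Defs
  imports "HOL-Library.Multiset"
begin

datatype gterm = Var nat | Mul gterm gterm

fun gsubst :: "(nat \<Rightarrow> gterm) \<Rightarrow> gterm \<Rightarrow> gterm" where
  "gsubst \<sigma> (Var x) = \<sigma> x"
| "gsubst \<sigma> (Mul p q) = Mul (gsubst \<sigma> p) (gsubst \<sigma> q)"

fun geval :: "(int \<Rightarrow> int \<Rightarrow> int) \<Rightarrow> (nat \<Rightarrow> int) \<Rightarrow> gterm \<Rightarrow> int" where
  "geval f v (Var x) = v x"
| "geval f v (Mul p q) = f (geval f v p) (geval f v q)"

fun fop :: "nat \<Rightarrow> int \<Rightarrow> int \<Rightarrow> int" where
  "fop k x y = (if k = 1 then x + y else if k = 2 then x - y
                else if k = 3 then - x + y else - x - y)"

definition Sigma :: "nat set \<Rightarrow> (gterm \<times> gterm) set" where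
  "Sigma K = {(p, q). \<forall>k\<in>K. \<forall>v. geval (fop k) v p = geval (fop k) v q}"

inductive eq_conseq :: "(gterm \<times> gterm) set \<Rightarrow> gterm \<Rightarrow> gterm \<Rightarrow> bool"
  for E where
  ax: "(p, q) \<in> E \<Longrightarrow> eq_conseq E (gsubst \<sigma> p) (gsubst \<sigma> q)"
| refl: "eq_conseq E p p"
| sym: "eq_conseq E p q \<Longrightarrow> eq_conseq E q p"
| trans: "eq_conseq E p q \<Longrightarrow> eq_conseq E q r \<Longrightarrow> eq_conseq E p r"
| cong: "eq_conseq E p p' \<Longrightarrow> eq_conseq E q q' \<Longrightarrow> eq_conseq E (Mul p q) (Mul p' q')"

definition is_basis :: "(gterm \<times> gterm) set \<Rightarrow> (gterm \<times> gterm) set \<Rightarrow> bool" where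
  "is_basis B S \<longleftrightarrow> {(p, q). eq_conseq B p q} = S"

text \<open>Klein 4-group as bool \<times> bool with componentwise xor.\<close>
type_synonym klein = "bool \<times> bool"

definition kmul :: "klein \<Rightarrow> klein \<Rightarrow> klein" where
  "kmul a b = (fst a \<noteq> fst b, snd a \<noteq> snd b)"

definition k1 :: klein where "k1 = (False, False)"
definition k\<alpha> :: klein where "k\<alpha> = (True, False)"
definition k\<beta> :: klein where "k\<beta> = (False, True)"
definition k\<gamma> :: klein where "k\<gamma> = (True, True)"

fun colors :: "gterm \<Rightarrow> nat \<Rightarrow> klein multiset" where
  "colors (Var y) x = (if y = x then {#k1#} else {#})"
| "colors (Mul p q) x = image_mset (kmul k\<alpha>) (colors p x) + image_mset (kmul k\<beta>) (colors q x)"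

fun vars :: "gterm \<Rightarrow> nat set" where
  "vars (Var y) = {y}"
| "vars (Mul p q) = vars p \<union> vars q"

definition basis_set :: "klein \<Rightarrow> klein \<Rightarrow> klein \<Rightarrow> klein \<Rightarrow> (gterm \<times> gterm) set" where
  "basis_set a b c d = {(p, q). \<forall>x \<in> vars p \<union> vars q.
      (size (colors p x) = 1 \<and> size (colors q x) = 1 \<and> colors p x = colors q x)
    \<or> (size (colors p x) = 2 \<and> size (colors q x) = 2 \<and>
        ((colors p x = {#a, b#} \<and> colors q x = {#c, d#}) \<or>
         (colors p x = {#c, d#} \<and> colors q x = {#a, b#})))}"

definition B123 :: "(gterm \<times> gterm) set" where
  "B123 = basis_set k\<alpha> k\<beta> k\<gamma> k1"

definition B124 :: "(gterm \<times> gterm) set" where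
  "B124 = basis_set k\<alpha> k\<gamma> k\<beta> k1"

end

theory Submission
  imports Defs "HOL-Library.Nat_Bijection"
begin

(* Each f_k is linear, f_k(x, y) = \<chi>(\<alpha>) x + \<chi>(\<beta>) y for a character \<chi> = \<chi>_k of the Klein group, so
   under f_k a term evaluates to the sum over its variables x of v(x) times the \<chi>-sum of the colours
   of the occurrences of x. Hence p = q lies in \<Sigma>_K iff, for every variable, the colour multisets of p
   and q have equal \<chi>_k-sums for all k \<in> K. Three of the four characters being given, the difference
   of the two multisets is a multiple of the missing character, i.e. one arises from the other by
   exchanging n copies of {a, b} for n copies of {c, d}. The basis identities satisfy this, which gives
   soundness. Conversely, such an exchange lets one pair the occurrences of each variable into single
   occurrences of equal colour in p and q, and {a, b}-groups against {c, d}-groups; renaming every group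
   to a fresh variable turns p = q into a basis identity of which p = q is a substitution instance. *)

section \<open>Evaluation under the operations f_k\<close>

(* kchar k is the character of the Klein group with fop k x y = kchar k k\<alpha> * x + kchar k k\<beta> * y. *)
definition kchar :: "nat \<Rightarrow> klein \<Rightarrow> int" where
  "kchar k c = (if k = 1 then 1 else if k = 2 then (if snd c then -1 else 1)
     else if k = 3 then (if fst c then -1 else 1)
     else (if fst c then -1 else 1) * (if snd c then -1 else 1))"

lemma kchar_kmul: "kchar k (kmul a b) = kchar k a * kchar k b"
  by (cases a; cases b) (auto simp: kchar_def kmul_def)

lemma kchar_values:
  "kchar 1 k1 = 1" "kchar 1 k\<alpha> = 1" "kchar 1 k\<beta> = 1" "kchar 1 k\<gamma> = 1"
  "kchar 2 k1 = 1" "kchar 2 k\<alpha> = 1" "kchar 2 k\<beta> = -1" "kchar 2 k\<gamma> = -1"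
  "kchar 3 k1 = 1" "kchar 3 k\<alpha> = -1" "kchar 3 k\<beta> = 1" "kchar 3 k\<gamma> = -1"
  "kchar 4 k1 = 1" "kchar 4 k\<alpha> = -1" "kchar 4 k\<beta> = -1" "kchar 4 k\<gamma> = 1"
  by (simp_all add: kchar_def k1_def k\<alpha>_def k\<beta>_def k\<gamma>_def)

lemma fop_eq_kchar: "fop k x y = kchar k k\<alpha> * x + kchar k k\<beta> * y"
  by (simp add: kchar_def k\<alpha>_def k\<beta>_def)

lemma klein_cases: "c = k1 \<or> c = k\<alpha> \<or> c = k\<beta> \<or> c = k\<gamma>"
  by (cases c) (auto simp: k1_def k\<alpha>_def k\<beta>_def k\<gamma>_def)

lemma klein_distinct: "distinct [k1, k\<alpha>, k\<beta>, k\<gamma>]"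
  by (simp add: k1_def k\<alpha>_def k\<beta>_def k\<gamma>_def)

definition kchar_sum :: "nat \<Rightarrow> klein multiset \<Rightarrow> int" where
  "kchar_sum k M = (\<Sum>c\<in>#M. kchar k c)"

lemma kchar_sum_image_kmul: "kchar_sum k (image_mset (kmul a) M) = kchar k a * kchar_sum k M"
  by (induction M) (simp_all add: kchar_sum_def kchar_kmul algebra_simps)

lemma kchar_sum_union: "kchar_sum k (M + N) = kchar_sum k M + kchar_sum k N"
  by (simp add: kchar_sum_def)

lemma kchar_sum_eq_counts: "kchar_sum k M = int (count M k1) * kchar k k1
   + int (count M k\<alpha>) * kchar k k\<alpha> + int (count M k\<beta>) * kchar k k\<beta> + int (count M k\<gamma>) * kchar k k\<gamma>"
proof (induction M)
  case (add c M)
  then show ?case using klein_cases[of c] klein_distinct by (auto simp: kchar_sum_def algebra_simps)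
qed (simp add: kchar_sum_def)

lemma vars_iff_colors: "x \<in> vars p \<longleftrightarrow> colors p x \<noteq> {#}"
  by (induction p) auto

lemma finite_vars: "finite (vars p)"
  by (induction p) auto

lemma geval_fop_eq_sum:
  assumes "finite V" "vars p \<subseteq> V"
  shows "geval (fop k) v p = (\<Sum>y\<in>V. v y * kchar_sum k (colors p y))"
  using assms(2)
proof (induction p)
  case (Var x)
  have "(\<Sum>y\<in>V. v y * kchar_sum k (colors (Var x) y)) = (\<Sum>y\<in>V. if x = y then v y else 0)"
    by (intro sum.cong) (auto simp: kchar_sum_def kchar_def k1_def)
  then show ?case using Var assms(1) by simp
next
  case (Mul p q)
  then show ?case
    by (simp only: geval.simps fop_eq_kchar vars.simps Un_subset_iff colors.simps)
      (simp add: kchar_sum_union kchar_sum_image_kmul sum_distrib_left sum.distrib algebra_simps)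
qed

lemma Sigma_imp_kchar_sum_eq:
  assumes "(p, q) \<in> Sigma K" "k \<in> K"
  shows "kchar_sum k (colors p x) = kchar_sum k (colors q x)"
proof -
  define V where "V = insert x (vars p \<union> vars q)"
  have V: "finite V" "vars p \<subseteq> V" "vars q \<subseteq> V"
    by (auto simp: V_def finite_vars)
  define v :: "nat \<Rightarrow> int" where "v y = (if y = x then 1 else 0)" for y
  have "geval (fop k) v r = kchar_sum k (colors r x)" if "vars r \<subseteq> V" for r
  proof -
    have "geval (fop k) v r = (\<Sum>y\<in>V. if y = x then kchar_sum k (colors r y) else 0)"
      unfolding geval_fop_eq_sum[OF V(1) that] by (intro sum.cong) (auto simp: v_def)
    also have "\<dots> = kchar_sum k (colors r x)"
      using V(1) by (simp add: V_def)
    finally show ?thesis .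
  qed
  moreover have "geval (fop k) v p = geval (fop k) v q"
    using assms unfolding Sigma_def by blast
  ultimately show ?thesis
    using V by metis
qed

lemma geval_gsubst: "geval f v (gsubst \<sigma> p) = geval f (\<lambda>x. geval f v (\<sigma> x)) p"
  by (induction p) auto

lemma Sigma_closed_eq_conseq:
  assumes "E \<subseteq> Sigma K" "eq_conseq E p q"
  shows "(p, q) \<in> Sigma K"
  using assms(2)
proof (induction rule: eq_conseq.induct)
  case (ax p q \<sigma>)
  then show ?case using assms(1) by (auto simp: Sigma_def geval_gsubst)
qed (auto simp: Sigma_def)

section \<open>Basis identities\<close>

definition basis_match :: "'a \<Rightarrow> 'a \<Rightarrow> 'a \<Rightarrow> 'a \<Rightarrow> 'a multiset \<Rightarrow> 'a multiset \<Rightarrow> bool" where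
  "basis_match a b c d M N \<longleftrightarrow> (M = {#} \<and> N = {#}) \<or> (\<exists>e. M = {#e#} \<and> N = {#e#})
     \<or> (M = {#a, b#} \<and> N = {#c, d#}) \<or> (M = {#c, d#} \<and> N = {#a, b#})"

lemma basis_match_swap: "basis_match c d a b M N \<longleftrightarrow> basis_match a b c d M N"
  unfolding basis_match_def by blast

lemma basis_match_nonempty:
  assumes "M \<noteq> {#} \<or> N \<noteq> {#}"
  shows "basis_match a b c d M N \<longleftrightarrow> (size M = 1 \<and> size N = 1 \<and> M = N)
    \<or> (size M = 2 \<and> size N = 2 \<and> ((M = {#a, b#} \<and> N = {#c, d#}) \<or> (M = {#c, d#} \<and> N = {#a, b#})))"
proof -
  have "size M = 1 \<longleftrightarrow> (\<exists>e. M = {#e#})" for M :: "'a multiset"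
    using size_1_singleton_mset by auto
  then show ?thesis
    using assms unfolding basis_match_def by auto
qed

lemma basis_set_iff:
  "(p, q) \<in> basis_set a b c d \<longleftrightarrow> (\<forall>x. basis_match a b c d (colors p x) (colors q x))"
  unfolding basis_set_def mem_Collect_eq prod.case Ball_def
proof (rule all_cong1)
  fix x
  show "(x \<in> vars p \<union> vars q \<longrightarrow> (size (colors p x) = 1 \<and> size (colors q x) = 1 \<and> colors p x = colors q x)
    \<or> (size (colors p x) = 2 \<and> size (colors q x) = 2 \<and>
        ((colors p x = {#a, b#} \<and> colors q x = {#c, d#}) \<or> (colors p x = {#c, d#} \<and> colors q x = {#a, b#}))))
    \<longleftrightarrow> basis_match a b c d (colors p x) (colors q x)"
  proof (cases "x \<in> vars p \<union> vars q")
    case True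
    then have "colors p x \<noteq> {#} \<or> colors q x \<noteq> {#}"
      using vars_iff_colors by auto
    then show ?thesis
      using True by (simp only: basis_match_nonempty simp_thms)
  next
    case False
    then show ?thesis by (simp add: vars_iff_colors basis_match_def)
  qed
qed

lemma kchar_sum_eq_if_basis_match:
  assumes "basis_match a b c d M N" "kchar k a + kchar k b = kchar k c + kchar k d"
  shows "kchar_sum k M = kchar_sum k N"
  using assms unfolding basis_match_def kchar_sum_def by auto

lemma basis_set_subset_Sigma:
  assumes "\<And>k. k \<in> K \<Longrightarrow> kchar k a + kchar k b = kchar k c + kchar k d"
  shows "basis_set a b c d \<subseteq> Sigma K"
proof (clarify)
  fix p q assume "(p, q) \<in> basis_set a b c d"
  then have sums: "kchar_sum k (colors p y) = kchar_sum k (colors q y)" if "k \<in> K" for k y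
    using assms[OF that] kchar_sum_eq_if_basis_match unfolding basis_set_iff by blast
  define V where "V = vars p \<union> vars q"
  have "finite V" "vars p \<subseteq> V" "vars q \<subseteq> V"
    by (auto simp: V_def finite_vars)
  then show "(p, q) \<in> Sigma K"
    unfolding Sigma_def using sums geval_fop_eq_sum by auto
qed

section \<open>Colour exchanges\<close>

definition exchangeable :: "'a \<Rightarrow> 'a \<Rightarrow> 'a \<Rightarrow> 'a \<Rightarrow> 'a multiset \<Rightarrow> 'a multiset \<Rightarrow> bool" where
  "exchangeable a b c d M N \<longleftrightarrow> (\<exists>n. M + repeat_mset n {#a, b#} = N + repeat_mset n {#c, d#}
                                 \<or> M + repeat_mset n {#c, d#} = N + repeat_mset n {#a, b#})"

lemma add_repeat_mset_eqI:
  assumes "\<And>z. int (count M z) - int (count N z) = int n * (int (count C z) - int (count D z))"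
  shows "M + repeat_mset n D = N + repeat_mset n C"
proof (rule multiset_eqI)
  fix z
  have "int (count M z + n * count D z) = int (count N z + n * count C z)"
    using assms[of z] by (simp add: algebra_simps)
  then show "count (M + repeat_mset n D) z = count (N + repeat_mset n C) z"
    by (simp only: of_nat_eq_iff count_union count_repeat_mset)
qed

lemma exchangeable_if_count_diff:
  assumes "\<And>z. int (count M z) - int (count N z) = s * (int (count {#c, d#} z) - int (count {#a, b#} z))"
  shows "exchangeable a b c d M N"
proof (cases "s \<ge> 0")
  case True
  then have "M + repeat_mset (nat s) {#a, b#} = N + repeat_mset (nat s) {#c, d#}"
    using assms by (intro add_repeat_mset_eqI) simp
  then show ?thesis
    unfolding exchangeable_def by blast
next
  case False
  then have "M + repeat_mset (nat (- s)) {#c, d#} = N + repeat_mset (nat (- s)) {#a, b#}"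
    using assms by (intro add_repeat_mset_eqI) (simp add: algebra_simps)
  then show ?thesis
    unfolding exchangeable_def by blast
qed

lemma count_diff_if_kchar_sums_eq:
  assumes j: "j \<in> {2, 3, 4}" and sums: "\<And>k. k \<in> {1, 2, 3, 4} - {j} \<Longrightarrow> kchar_sum k M = kchar_sum k N"
  shows "int (count M z) - int (count N z) = (int (count M k1) - int (count N k1)) * kchar j z"
proof -
  define \<delta> where "\<delta> z = int (count M z) - int (count N z)" for z
  have eq: "\<delta> k1 * kchar k k1 + \<delta> k\<alpha> * kchar k k\<alpha> + \<delta> k\<beta> * kchar k k\<beta> + \<delta> k\<gamma> * kchar k k\<gamma> = 0"
    if "k \<in> {1, 2, 3, 4} - {j}" for k
    using sums[OF that] unfolding kchar_sum_eq_counts \<delta>_def by (simp add: algebra_simps)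
  from j consider "j = 2" | "j = 3" | "j = 4" by blast
  then have "\<delta> z = \<delta> k1 * kchar j z"
  proof cases
    case 1
    then show ?thesis using eq[of 1] eq[of 3] eq[of 4] klein_cases[of z] by (auto simp: kchar_values[simplified])
  next
    case 2
    then show ?thesis using eq[of 1] eq[of 2] eq[of 4] klein_cases[of z] by (auto simp: kchar_values[simplified])
  next
    case 3
    then show ?thesis using eq[of 1] eq[of 2] eq[of 3] klein_cases[of z] by (auto simp: kchar_values[simplified])
  qed
  then show ?thesis unfolding \<delta>_def .
qed

definition distinct_mset :: "'a multiset \<Rightarrow> bool" where
  "distinct_mset M \<longleftrightarrow> (\<forall>x. count M x \<le> 1)"

lemma distinct_mset_union_D:
  assumes "distinct_mset (M + N)"
  shows "distinct_mset N" and "x \<in># M \<Longrightarrow> x \<notin># N"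
proof -
  have count_le: "count M z + count N z \<le> 1" for z
    using assms unfolding distinct_mset_def by (metis count_union)
  then show "distinct_mset N"
    unfolding distinct_mset_def by (meson add_leD2)
  show "x \<notin># N" if "x \<in># M"
  proof -
    have "0 < count M x"
      using that by simp
    then show ?thesis
      using count_le[of x] unfolding not_in_iff by linarith
  qed
qed

definition partitionable :: "('z multiset \<Rightarrow> 'z multiset \<Rightarrow> bool) \<Rightarrow> 'z multiset \<Rightarrow> 'z multiset \<Rightarrow> bool" where
  "partitionable R A B \<longleftrightarrow>
     (\<exists>gA gB :: 'z \<Rightarrow> nat. \<forall>k. R (filter_mset (\<lambda>z. gA z = k) A) (filter_mset (\<lambda>z. gB z = k) B))"

lemma partitionable_empty: "R {#} {#} \<Longrightarrow> partitionable R {#} {#}"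
  unfolding partitionable_def by simp

lemma filter_mset_label_shift:
  fixes g :: "'a \<Rightarrow> nat"
  assumes "distinct_mset (A0 + A)"
  defines "h \<equiv> \<lambda>z. if z \<in># A0 then 0 else Suc (g z)"
  shows "filter_mset (\<lambda>z. h z = 0) (A0 + A) = A0"
    and "filter_mset (\<lambda>z. h z = Suc k) (A0 + A) = filter_mset (\<lambda>z. g z = k) A"
proof -
  have notin: "z \<notin># A0" if "z \<in># A" for z
    using distinct_mset_union_D(2)[OF assms(1)] that by blast
  have "filter_mset (\<lambda>z. h z = 0) A0 = filter_mset (\<lambda>z. True) A0"
    "filter_mset (\<lambda>z. h z = Suc k) A0 = filter_mset (\<lambda>z. False) A0"
    "filter_mset (\<lambda>z. h z = 0) A = filter_mset (\<lambda>z. False) A"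
    "filter_mset (\<lambda>z. h z = Suc k) A = filter_mset (\<lambda>z. g z = k) A"
    by (rule filter_mset_cong0, simp add: h_def notin)+
  then show "filter_mset (\<lambda>z. h z = 0) (A0 + A) = A0"
    and "filter_mset (\<lambda>z. h z = Suc k) (A0 + A) = filter_mset (\<lambda>z. g z = k) A"
    by simp_all
qed

lemma partitionable_add:
  assumes "distinct_mset (A0 + A)" "distinct_mset (B0 + B)" "R A0 B0" "partitionable R A B"
  shows "partitionable R (A0 + A) (B0 + B)"
proof -
  obtain gA gB :: "_ \<Rightarrow> nat" where g: "\<forall>k. R (filter_mset (\<lambda>z. gA z = k) A) (filter_mset (\<lambda>z. gB z = k) B)"
    using assms(4) unfolding partitionable_def by blast
  define hA where "hA = (\<lambda>z. if z \<in># A0 then 0 else Suc (gA z))"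
  define hB where "hB = (\<lambda>z. if z \<in># B0 then 0 else Suc (gB z))"
  have "R (filter_mset (\<lambda>z. hA z = k) (A0 + A)) (filter_mset (\<lambda>z. hB z = k) (B0 + B))" for k
    using assms(3) g unfolding hA_def hB_def
    by (cases k) (simp_all only: filter_mset_label_shift[OF assms(1)] filter_mset_label_shift[OF assms(2)])
  then show ?thesis
    unfolding partitionable_def by blast
qed

lemma pair_subseteq_mset: "x \<noteq> y \<Longrightarrow> x \<in># M \<Longrightarrow> y \<in># M \<Longrightarrow> {#x, y#} \<subseteq># M"
  by (auto simp: subseteq_mset_def)

lemma exchange_eq_split:
  assumes "distinct [a, b, c, d]"
    and "image_mset col A + repeat_mset (Suc m) {#a, b#} = image_mset col B + repeat_mset (Suc m) {#c, d#}"
  obtains A0 A' B0 B' where "A = A0 + A'" "image_mset col A0 = {#c, d#}"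
    and "B = B0 + B'" "image_mset col B0 = {#a, b#}"
    and "image_mset col A' + repeat_mset m {#a, b#} = image_mset col B' + repeat_mset m {#c, d#}"
proof -
  have count_eq: "count (image_mset col A) z + Suc m * count {#a, b#} z
      = count (image_mset col B) z + Suc m * count {#c, d#} z" for z
    using arg_cong[OF assms(2), of "\<lambda>M. count M z"] by (simp only: count_union count_repeat_mset)
  have "z \<in># image_mset col A" if "z \<in> {c, d}" for z
    using count_eq[of z] assms(1) that by (intro count_inI) auto
  then have "{#c, d#} \<subseteq># image_mset col A"
    using assms(1) by (intro pair_subseteq_mset) auto
  then obtain A0 A' where A: "A = A0 + A'" "image_mset col A0 = {#c, d#}"
    by (metis image_mset_eq_plusD subset_mset.add_diff_inverse)
  have "z \<in># image_mset col B" if "z \<in> {a, b}" for z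
    using count_eq[of z] assms(1) that by (intro count_inI) auto
  then have "{#a, b#} \<subseteq># image_mset col B"
    using assms(1) by (intro pair_subseteq_mset) auto
  then obtain B0 B' where B: "B = B0 + B'" "image_mset col B0 = {#a, b#}"
    by (metis image_mset_eq_plusD subset_mset.add_diff_inverse)
  have "({#a, b#} + {#c, d#}) + (image_mset col A' + repeat_mset m {#a, b#})
      = image_mset col A + repeat_mset (Suc m) {#a, b#}"
    using A by (simp only: repeat_mset_Suc image_mset_union ac_simps)
  also have "\<dots> = image_mset col B + repeat_mset (Suc m) {#c, d#}"
    by (rule assms(2))
  also have "\<dots> = ({#a, b#} + {#c, d#}) + (image_mset col B' + repeat_mset m {#c, d#})"
    using B by (simp only: repeat_mset_Suc image_mset_union ac_simps)
  finally have "image_mset col A' + repeat_mset m {#a, b#} = image_mset col B' + repeat_mset m {#c, d#}"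
    by (rule add_left_imp_eq)
  then show thesis
    using that A B by blast
qed

lemma partitionable_if_exchange_eq:
  fixes col :: "'z \<Rightarrow> 'a"
  assumes "distinct_mset A" "distinct_mset B" "distinct [a, b, c, d]"
    and "image_mset col A + repeat_mset n {#a, b#} = image_mset col B + repeat_mset n {#c, d#}"
  shows "partitionable (\<lambda>X Y. basis_match a b c d (image_mset col X) (image_mset col Y)) A B"
  using assms(1,2,4)
proof (induction "size A" arbitrary: A B n rule: less_induct)
  case less
  let ?R = "\<lambda>X Y. basis_match a b c d (image_mset col X) (image_mset col Y)"
  have peel: "partitionable ?R A B"
    if "A = A0 + A'" "B = B0 + B'" "A0 \<noteq> {#}" "?R A0 B0"
      and "image_mset col A' + repeat_mset m {#a, b#} = image_mset col B' + repeat_mset m {#c, d#}"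
    for A0 A' B0 B' m
  proof -
    have "size A' < size A"
      using that(1,3) by (simp add: nonempty_has_size)
    moreover have "distinct_mset A'" "distinct_mset B'"
      using less.prems(1,2) distinct_mset_union_D(1) unfolding that(1,2) by blast+
    ultimately have "partitionable ?R A' B'"
      by (rule less.hyps[OF _ _ _ that(5)])
    then show ?thesis
      using less.prems(1,2) that(4) unfolding that(1,2) by (rule partitionable_add[rotated 3])
  qed
  show ?case
  proof (cases n)
    case (Suc m)
    obtain A0 A' B0 B' where
      "A = A0 + A'" "image_mset col A0 = {#c, d#}" "B = B0 + B'" "image_mset col B0 = {#a, b#}"
      "image_mset col A' + repeat_mset m {#a, b#} = image_mset col B' + repeat_mset m {#c, d#}"
      using exchange_eq_split[OF assms(3) less.prems(3)[unfolded Suc]] .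
    then show ?thesis
      by (intro peel) (auto simp: basis_match_def)
  next
    case 0
    then have same_colors: "image_mset col A = image_mset col B"
      using less.prems(3) by simp
    show ?thesis
    proof (cases "A = {#}")
      case True
      then show ?thesis
        using same_colors partitionable_empty[of ?R] by (simp add: basis_match_def)
    next
      case False
      then obtain z A' where A: "A = {#z#} + A'"
        by (metis multi_nonempty_split add_mset_add_single add.commute)
      with same_colors obtain B0 B' where B:
        "B = B0 + B'" "image_mset col B0 = {#col z#}" "image_mset col A' = image_mset col B'"
        using image_mset_eq_plusD[of col B "{#col z#}" "image_mset col A'"] by auto
      have "?R {#z#} B0"
        using B(2) by (simp add: basis_match_def)
      with A B show ?thesis
        by (intro peel[of "{#z#}" A' B0 B' 0]) simp_all
    qed
  qed
qed

lemma partitionable_if_exchangeable: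
  fixes col :: "'z \<Rightarrow> 'a"
  assumes "distinct_mset A" "distinct_mset B" "distinct [a, b, c, d]"
    and "exchangeable a b c d (image_mset col A) (image_mset col B)"
  shows "partitionable (\<lambda>X Y. basis_match a b c d (image_mset col X) (image_mset col Y)) A B"
proof -
  obtain n where
    "image_mset col A + repeat_mset n {#a, b#} = image_mset col B + repeat_mset n {#c, d#}
     \<or> image_mset col A + repeat_mset n {#c, d#} = image_mset col B + repeat_mset n {#a, b#}"
    using assms(4) unfolding exchangeable_def by blast
  then show ?thesis
  proof
    assume "image_mset col A + repeat_mset n {#a, b#} = image_mset col B + repeat_mset n {#c, d#}"
    then show ?thesis
      by (rule partitionable_if_exchange_eq[OF assms(1-3)])
  next
    assume "image_mset col A + repeat_mset n {#c, d#} = image_mset col B + repeat_mset n {#a, b#}"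
    moreover have "distinct [c, d, a, b]"
      using assms(3) by auto
    ultimately have "partitionable (\<lambda>X Y. basis_match c d a b (image_mset col X) (image_mset col Y)) A B"
      by (rule partitionable_if_exchange_eq[OF assms(1,2), rotated])
    then show ?thesis
      by (simp only: basis_match_swap)
  qed
qed

section \<open>Renaming occurrences apart\<close>

fun positions :: "gterm \<Rightarrow> nat \<Rightarrow> bool list multiset" where
  "positions (Var y) x = (if y = x then {#[]#} else {#})"
| "positions (Mul p q) x =
     image_mset (Cons True) (positions p x) + image_mset (Cons False) (positions q x)"

fun path_color :: "bool list \<Rightarrow> klein" where
  "path_color [] = k1"
| "path_color (b # \<pi>) = kmul (if b then k\<alpha> else k\<beta>) (path_color \<pi>)"

lemma colors_eq_image_positions: "colors p x = image_mset path_color (positions p x)"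
  by (induction p) (simp_all add: multiset.map_comp comp_def)

lemma count_image_Cons:
  "count (image_mset (Cons b) M) [] = 0"
  "count (image_mset (Cons b) M) (b' # \<pi>) = (if b = b' then count M \<pi> else 0)"
  by (induction M) auto

lemma distinct_mset_image_Cons:
  assumes "distinct_mset M" "distinct_mset N"
  shows "distinct_mset (image_mset (Cons True) M + image_mset (Cons False) N)"
  unfolding distinct_mset_def
proof
  fix \<pi> :: "bool list"
  show "count (image_mset (Cons True) M + image_mset (Cons False) N) \<pi> \<le> 1"
    using assms unfolding distinct_mset_def
    by (cases \<pi>) (simp_all add: count_image_Cons)
qed

lemma distinct_positions: "distinct_mset (positions p x)"
proof (induction p)
  case (Var y)
  then show ?case by (simp add: distinct_mset_def)
qed (simp add: distinct_mset_image_Cons)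

(* The occurrence of x at position \<pi> is renamed to the variable prod_encode (x, h \<pi> x), so the
   occurrences of x are split into the classes of the labelling h \<pi> x; projecting to fst \<circ> prod_decode
   undoes the renaming. *)
fun relabel :: "(bool list \<Rightarrow> nat \<Rightarrow> nat) \<Rightarrow> gterm \<Rightarrow> gterm" where
  "relabel h (Var x) = Var (prod_encode (x, h [] x))"
| "relabel h (Mul p q) = Mul (relabel (\<lambda>\<pi>. h (True # \<pi>)) p) (relabel (\<lambda>\<pi>. h (False # \<pi>)) q)"

lemma gsubst_relabel: "gsubst (\<lambda>y. Var (fst (prod_decode y))) (relabel h p) = p"
  by (induction p arbitrary: h) simp_all

lemma positions_relabel:
  "positions (relabel h p) (prod_encode (x, k)) = filter_mset (\<lambda>\<pi>. h \<pi> x = k) (positions p x)"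
  by (induction p arbitrary: h) (auto simp: filter_mset_image_mset comp_def)

lemma eq_conseq_if_exchangeable:
  assumes "distinct [a, b, c, d]" "\<And>x. exchangeable a b c d (colors p x) (colors q x)"
  shows "eq_conseq (basis_set a b c d) p q"
proof -
  let ?R = "\<lambda>X Y. basis_match a b c d (image_mset path_color X) (image_mset path_color Y)"
  have "partitionable ?R (positions p x) (positions q x)" for x
    using partitionable_if_exchangeable[OF distinct_positions distinct_positions assms(1)]
      assms(2)[of x] unfolding colors_eq_image_positions by blast
  then have "\<forall>x. \<exists>gA gB :: bool list \<Rightarrow> nat. \<forall>k.
      ?R (filter_mset (\<lambda>\<pi>. gA \<pi> = k) (positions p x)) (filter_mset (\<lambda>\<pi>. gB \<pi> = k) (positions q x))"
    unfolding partitionable_def by blast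
  then obtain gp gq :: "nat \<Rightarrow> bool list \<Rightarrow> nat" where g: "\<And>x k.
      ?R (filter_mset (\<lambda>\<pi>. gp x \<pi> = k) (positions p x)) (filter_mset (\<lambda>\<pi>. gq x \<pi> = k) (positions q x))"
    by metis
  define hp where "hp \<pi> x = gp x \<pi>" for \<pi> x
  define hq where "hq \<pi> x = gq x \<pi>" for \<pi> x
  have "basis_match a b c d (colors (relabel hp p) y) (colors (relabel hq q) y)" for y
  proof -
    obtain x k where "y = prod_encode (x, k)"
      by (metis prod_decode_inverse surj_pair)
    then show ?thesis
      using g[of x k] by (simp add: colors_eq_image_positions positions_relabel hp_def hq_def)
  qed
  then have "(relabel hp p, relabel hq q) \<in> basis_set a b c d"
    by (simp add: basis_set_iff)
  from eq_conseq.ax[OF this, of "\<lambda>y. Var (fst (prod_decode y))"] show ?thesis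
    by (simp add: gsubst_relabel)
qed

theorem is_basis_basis_set:
  assumes "j \<in> {2, 3, 4}" "K = {1, 2, 3, 4} - {j}" "distinct [a, b, c, d]"
    and "\<And>z. kchar j z = int (count {#c, d#} z) - int (count {#a, b#} z)"
    and "\<And>k. k \<in> K \<Longrightarrow> kchar k a + kchar k b = kchar k c + kchar k d"
  shows "is_basis (basis_set a b c d) (Sigma K)"
  unfolding is_basis_def
proof (intro set_eqI iffI; clarify)
  fix p q
  have "basis_set a b c d \<subseteq> Sigma K"
    by (rule basis_set_subset_Sigma) (rule assms(5))
  moreover assume "eq_conseq (basis_set a b c d) p q"
  ultimately show "(p, q) \<in> Sigma K"
    by (rule Sigma_closed_eq_conseq)
next
  fix p q
  assume pq: "(p, q) \<in> Sigma K"
  have "exchangeable a b c d (colors p x) (colors q x)" for x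
  proof (rule exchangeable_if_count_diff)
    have "kchar_sum k (colors p x) = kchar_sum k (colors q x)" if "k \<in> {1, 2, 3, 4} - {j}" for k
      using Sigma_imp_kchar_sum_eq[OF pq] assms(2) that by blast
    then show "int (count (colors p x) z) - int (count (colors q x) z)
      = (int (count (colors p x) k1) - int (count (colors q x) k1))
        * (int (count {#c, d#} z) - int (count {#a, b#} z))" for z
      unfolding assms(4)[symmetric] by (rule count_diff_if_kchar_sums_eq[OF assms(1)])
  qed
  then show "eq_conseq (basis_set a b c d) p q"
    by (rule eq_conseq_if_exchangeable[OF assms(3)])
qed

theorem lemma2p2:
  shows "is_basis B123 (Sigma {1, 2, 3}) \<and> is_basis B124 (Sigma {1, 2, 4})"
proof
  show "is_basis B123 (Sigma {1, 2, 3})"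
    unfolding B123_def
  proof (rule is_basis_basis_set[where j = 4])
    show "kchar 4 z = int (count {#k\<gamma>, k1#} z) - int (count {#k\<alpha>, k\<beta>#} z)" for z
      using klein_cases[of z] klein_distinct by (auto simp: kchar_values)
  qed (use klein_distinct in \<open>auto simp: kchar_def k1_def k\<alpha>_def k\<beta>_def k\<gamma>_def\<close>)
  show "is_basis B124 (Sigma {1, 2, 4})"
    unfolding B124_def
  proof (rule is_basis_basis_set[where j = 3])
    show "kchar 3 z = int (count {#k\<beta>, k1#} z) - int (count {#k\<alpha>, k\<gamma>#} z)" for z
      using klein_cases[of z] klein_distinct by (auto simp: kchar_values)
  qed (use klein_distinct in \<open>auto simp: kchar_def k1_def k\<alpha>_def k\<beta>_def k\<gamma>_def\<close>)
qed

end
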